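(* Fix a round $t$. Let $x_{ti} \in \mathbb{R}^d$ and revenues $r_{ti}$ with $|r_{ti}| \le 1$. Let $\theta^* \in \mathbb{R}^d$, $\alpha_t > 0$, and let $V_t$ be positive definite. Let $z_{ti}$ be real numbers, and let $S_t$ be the chosen assortment. Suppose that for all $i \in S_t$, $$0 \le z_{ti} - x_{ti}^\top\theta^* \le 2\alpha_t\|x_{ti}\|_{V_t^{-1}}.$$ Then $$\tilde R_t(S_t) - R_t(S_t,\theta^* ) \le 2\alpha_t\max_{i\in S_t}\|x_{ti}\|_{V_t^{-1}}.$$
   Context: For an assortment $S$, the MNL expected revenue is $$R_t(S,\theta) = \frac{\sum_{i\in S}r_{ti}\exp(x_{ti}^\top\theta)}{1+\sum_{j\in S}\exp(x_{tj}^\top\theta)},$$ and the optimistic revenue is $$\tilde R_t(S) = \frac{\sum_{i\in S}r_{ti}\exp(z_{ti})}{1+\sum_{j\in S}\exp(z_{tj})}.$$ Also $\|x\|_{V^{-1}} = \sqrt{x^\top V^{-1}x}$. *)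

theory Defs
  imports "HOL-Analysis.Analysis"
begin

definition pos_def_mat :: "real^'d^'d \<Rightarrow> bool" where
  "pos_def_mat V \<longleftrightarrow> transpose V = V \<and> (\<forall>x. x \<noteq> 0 \<longrightarrow> x \<bullet> (V *v x) > 0)"

definition inv_norm :: "real^'d^'d \<Rightarrow> real^'d \<Rightarrow> real" where
  "inv_norm V x = sqrt (x \<bullet> (matrix_inv V *v x))"

definition mnl_revenue :: "'i set \<Rightarrow> ('i \<Rightarrow> real) \<Rightarrow> ('i \<Rightarrow> real^'d) \<Rightarrow> real^'d \<Rightarrow> real" where
  "mnl_revenue S r x \<theta> =
     (\<Sum>i\<in>S. r i * exp (x i \<bullet> \<theta>)) / (1 + (\<Sum>j\<in>S. exp (x j \<bullet> \<theta>)))"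

definition opt_revenue :: "'i set \<Rightarrow> ('i \<Rightarrow> real) \<Rightarrow> ('i \<Rightarrow> real) \<Rightarrow> real" where
  "opt_revenue S r z = (\<Sum>i\<in>S. r i * exp (z i)) / (1 + (\<Sum>j\<in>S. exp (z j)))"

end

theory Submission
  imports Defs
begin

text \<open>Move the utilities from \<open>x i \<bullet> \<theta>\<close> to \<open>z i\<close> along the segment
  \<open>u + s (z - u)\<close>, \<open>0 \<le> s \<le> 1\<close>. The derivative of the MNL revenue in direction \<open>d\<close> is
  \<open>\<Sum>\<^sub>i d\<^sub>i p\<^sub>i (r\<^sub>i - R)\<close> with choice probabilities \<open>p\<^sub>i\<close>, and since \<open>0 \<le> d\<^sub>i \<le> D\<close> and
  \<open>\<bar>r\<^sub>i\<bar> \<le> 1\<close> it is at most \<open>D \<Sum>\<^sub>i p\<^sub>i max 0 (r\<^sub>i - R) \<le> D\<close>. The mean value theorem then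
  bounds the revenue gain by the largest utility gap \<open>D\<close>.\<close>

lemma opt_revenue_denom_pos:
  fixes w :: "'i \<Rightarrow> real"
  shows "0 < 1 + (\<Sum>i\<in>S. exp (w i))"
  by (intro add_pos_nonneg) (auto intro: sum_nonneg)

lemma abs_opt_revenue_le:
  fixes r w :: "'i \<Rightarrow> real"
  assumes "\<And>i. i \<in> S \<Longrightarrow> \<bar>r i\<bar> \<le> 1"
  shows "\<bar>opt_revenue S r w\<bar> \<le> 1"
proof -
  have "\<bar>\<Sum>i\<in>S. r i * exp (w i)\<bar> \<le> (\<Sum>i\<in>S. \<bar>r i\<bar> * exp (w i))"
    using sum_abs[of "\<lambda>i. r i * exp (w i)" S] by (simp add: abs_mult)
  also have "\<dots> \<le> (\<Sum>i\<in>S. exp (w i))"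
    using assms by (intro sum_mono) (simp add: mult_le_cancel_right1)
  also have "\<dots> \<le> 1 + (\<Sum>i\<in>S. exp (w i))"
    by simp
  finally have "\<bar>\<Sum>i\<in>S. r i * exp (w i)\<bar> \<le> 1 + (\<Sum>i\<in>S. exp (w i))" .
  with opt_revenue_denom_pos[of w S] show ?thesis
    unfolding opt_revenue_def abs_divide by simp
qed

lemma opt_revenue_excess_le:
  fixes r w :: "'i \<Rightarrow> real"
  assumes "finite S" and "\<And>i. i \<in> S \<Longrightarrow> \<bar>r i\<bar> \<le> 1"
  shows "(\<Sum>i\<in>S. exp (w i) * max 0 (r i - opt_revenue S r w)) \<le> 1 + (\<Sum>i\<in>S. exp (w i))"
proof -
  define R where "R = opt_revenue S r w"
  define E where "E = (\<Sum>i\<in>S. exp (w i))"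
  have numer: "(\<Sum>i\<in>S. r i * exp (w i)) = R * (1 + E)"
    using opt_revenue_denom_pos[of w S] unfolding R_def E_def opt_revenue_def by simp
  have "\<bar>R\<bar> \<le> 1"
    unfolding R_def by (rule abs_opt_revenue_le) (rule assms(2))
  show ?thesis
  proof (cases "R \<ge> 0")
    case True
    have "max 0 (r i - R) \<le> 1" if "i \<in> S" for i
      using True assms(2)[OF that] by (simp add: abs_le_iff)
    then have "(\<Sum>i\<in>S. exp (w i) * max 0 (r i - R)) \<le> E"
      unfolding E_def by (intro sum_mono) (simp add: mult_le_cancel_left1)
    then show ?thesis
      unfolding R_def E_def by simp
  next
    case False
    have "(\<Sum>i\<in>S. exp (w i) * max 0 (r i - R))
        = (\<Sum>i\<in>S. exp (w i) * (r i - R)) + (\<Sum>i\<in>S. exp (w i) * max 0 (R - r i))"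
      by (simp add: sum.distrib[symmetric]) (rule sum.cong, auto simp: max_def algebra_simps)
    also have "(\<Sum>i\<in>S. exp (w i) * (r i - R)) = R"
      using numer unfolding E_def by (simp add: algebra_simps sum_subtractf sum_distrib_left)
    also have "(\<Sum>i\<in>S. exp (w i) * max 0 (R - r i)) \<le> (\<Sum>i\<in>S. exp (w i) * (R + 1))"
      using assms(2) \<open>\<bar>R\<bar> \<le> 1\<close>
      by (intro sum_mono mult_left_mono) (auto simp: abs_le_iff)
    also have "\<dots> = E * R + E"
      unfolding E_def by (simp add: sum.distrib sum_distrib_left algebra_simps)
    finally have "(\<Sum>i\<in>S. exp (w i) * max 0 (r i - R)) \<le> R + E * R + E"
      by simp
    moreover have "E * R \<le> 0"
      using False unfolding E_def by (simp add: mult_nonneg_nonpos sum_nonneg)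
    ultimately show ?thesis
      using False unfolding R_def[symmetric] E_def[symmetric] by linarith
  qed
qed

lemma opt_revenue_directional_le:
  fixes r w d :: "'i \<Rightarrow> real"
  assumes "finite S" and "\<And>i. i \<in> S \<Longrightarrow> \<bar>r i\<bar> \<le> 1"
    and "\<And>i. i \<in> S \<Longrightarrow> 0 \<le> d i \<and> d i \<le> D" and "0 \<le> D"
  shows "(\<Sum>i\<in>S. d i * exp (w i) * (r i - opt_revenue S r w)) \<le> D * (1 + (\<Sum>i\<in>S. exp (w i)))"
proof -
  have "d i * exp (w i) * (r i - opt_revenue S r w) \<le> D * (exp (w i) * max 0 (r i - opt_revenue S r w))"
    if "i \<in> S" for i
  proof -
    have "d i * exp (w i) * (r i - opt_revenue S r w) \<le> d i * (exp (w i) * max 0 (r i - opt_revenue S r w))"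
      using assms(3)[OF that] by (simp add: mult.assoc mult_left_mono)
    also have "\<dots> \<le> D * (exp (w i) * max 0 (r i - opt_revenue S r w))"
      using assms(3)[OF that] by (intro mult_right_mono) auto
    finally show ?thesis .
  qed
  then have "(\<Sum>i\<in>S. d i * exp (w i) * (r i - opt_revenue S r w))
      \<le> D * (\<Sum>i\<in>S. exp (w i) * max 0 (r i - opt_revenue S r w))"
    by (simp add: sum_distrib_left sum_mono)
  also have "\<dots> \<le> D * (1 + (\<Sum>i\<in>S. exp (w i)))"
    using opt_revenue_excess_le[OF assms(1,2)] assms(4) by (rule mult_left_mono)
  finally show ?thesis .
qed

lemma opt_revenue_line_has_derivative:
  fixes r u d :: "'i \<Rightarrow> real"
  defines "w \<equiv> \<lambda>s i. u i + s * d i"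
  shows "((\<lambda>s. opt_revenue S r (w s)) has_real_derivative
      (\<Sum>i\<in>S. d i * exp (w s i) * (r i - opt_revenue S r (w s))) / (1 + (\<Sum>i\<in>S. exp (w s i)))) (at s)"
proof -
  define N where "N = (\<Sum>i\<in>S. r i * exp (w s i))"
  define B where "B = 1 + (\<Sum>i\<in>S. exp (w s i))"
  define N' where "N' = (\<Sum>i\<in>S. r i * exp (w s i) * d i)"
  define B' where "B' = (\<Sum>i\<in>S. exp (w s i) * d i)"
  have "((\<lambda>s. \<Sum>i\<in>S. r i * exp (w s i)) has_real_derivative N') (at s)"
    unfolding N'_def w_def by (auto intro!: derivative_eq_intros simp: mult_ac)
  moreover have "((\<lambda>s. 1 + (\<Sum>i\<in>S. exp (w s i))) has_real_derivative B') (at s)"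
    unfolding B'_def w_def by (auto intro!: derivative_eq_intros)
  moreover have "B \<noteq> 0"
    using opt_revenue_denom_pos[of "w s" S] unfolding B_def by simp
  ultimately have quotient_rule:
      "((\<lambda>s. opt_revenue S r (w s)) has_real_derivative (N' * B - N * B') / (B * B)) (at s)"
    unfolding opt_revenue_def N_def B_def by (rule DERIV_divide)
  have "(\<Sum>i\<in>S. d i * exp (w s i) * (r i - N / B)) = N' - N / B * B'"
    unfolding N'_def B'_def sum_distrib_left sum_subtractf[symmetric]
    by (rule sum.cong) (auto simp: algebra_simps)
  also have "\<dots> = (N' * B - N * B') / B"
    using \<open>B \<noteq> 0\<close> by (simp add: field_simps)
  finally have "(\<Sum>i\<in>S. d i * exp (w s i) * (r i - N / B)) / B = (N' * B - N * B') / (B * B)"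
    by simp
  then show ?thesis
    using quotient_rule unfolding opt_revenue_def N_def[symmetric] B_def[symmetric] by simp
qed

lemma opt_revenue_diff_le:
  fixes r u v :: "'i \<Rightarrow> real"
  assumes "finite S" and "\<And>i. i \<in> S \<Longrightarrow> \<bar>r i\<bar> \<le> 1"
    and "\<And>i. i \<in> S \<Longrightarrow> 0 \<le> v i - u i \<and> v i - u i \<le> D" and "0 \<le> D"
  shows "opt_revenue S r v - opt_revenue S r u \<le> D"
proof -
  define w where "w = (\<lambda>s i. u i + s * (v i - u i))"
  define R' where "R' s = (\<Sum>i\<in>S. (v i - u i) * exp (w s i) * (r i - opt_revenue S r (w s)))
      / (1 + (\<Sum>i\<in>S. exp (w s i)))" for s
  have "((\<lambda>s. opt_revenue S r (w s)) has_real_derivative R' s) (at s)" for s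
    unfolding R'_def w_def by (rule opt_revenue_line_has_derivative)
  then obtain \<xi> where "opt_revenue S r (w 1) - opt_revenue S r (w 0) = R' \<xi>"
    using MVT2[of 0 1 "\<lambda>s. opt_revenue S r (w s)" R'] by auto
  moreover have "R' \<xi> \<le> D"
    using opt_revenue_directional_le[OF assms(1,2), where d="\<lambda>i. v i - u i" and D=D and w="w \<xi>"]
      assms(3,4) opt_revenue_denom_pos[of "w \<xi>" S]
    unfolding R'_def by (simp add: pos_divide_le_eq)
  moreover have "w 1 = v" and "w 0 = u"
    by (auto simp: w_def)
  ultimately show ?thesis
    by simp
qed

theorem lemma5:
  fixes S :: "'i set" and x :: "'i \<Rightarrow> real^'d" and r z :: "'i \<Rightarrow> real"
    and \<theta> :: "real^'d" and \<alpha> :: real and V :: "real^'d^'d"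
  assumes "finite S" and "S \<noteq> {}"
    and "\<And>i. i \<in> S \<Longrightarrow> \<bar>r i\<bar> \<le> 1"
    and "\<alpha> > 0"
    and "pos_def_mat V"
    and "\<And>i. i \<in> S \<Longrightarrow> 0 \<le> z i - x i \<bullet> \<theta> \<and> z i - x i \<bullet> \<theta> \<le> 2 * \<alpha> * inv_norm V (x i)"
  shows "opt_revenue S r z - mnl_revenue S r x \<theta> \<le> 2 * \<alpha> * (MAX i\<in>S. inv_norm V (x i))"
proof -
  define D where "D = 2 * \<alpha> * (MAX i\<in>S. inv_norm V (x i))"
  have gap: "0 \<le> z i - x i \<bullet> \<theta> \<and> z i - x i \<bullet> \<theta> \<le> D" if "i \<in> S" for i
  proof -
    have "inv_norm V (x i) \<le> (MAX i\<in>S. inv_norm V (x i))"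
      using assms(1) that by (intro Max_ge) auto
    then have "2 * \<alpha> * inv_norm V (x i) \<le> D"
      unfolding D_def using assms(4) by simp
    then show ?thesis
      using assms(6)[OF that] by linarith
  qed
  moreover have "0 \<le> D"
    using gap assms(2) by fastforce
  moreover have "mnl_revenue S r x \<theta> = opt_revenue S r (\<lambda>i. x i \<bullet> \<theta>)"
    unfolding mnl_revenue_def opt_revenue_def ..
  ultimately show ?thesis
    unfolding D_def using opt_revenue_diff_le[OF assms(1,3)] by simp
qed

end
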